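(* Let $\Omega\subset\mathbb{C}^n$ be a bounded domain, let $\mathcal R$ and $\mathcal R'$ be quasi-free Hilbert modules of rank $m$, $1\le m<\infty$, over $A(\Omega)$ with generating sets $\{f_i\}_{i=1}^m$ and $\{g_i\}_{i=1}^m$, and let $\delta=\delta(\mathcal R,\mathcal R')$ with Hilbert space adjoint $\delta^*:\mathcal R'\to\mathcal R$. Then the domain of $\delta^*$ contains the finite linear span of $\{k'^i_z:z\in\Omega,1\le i\le m\}$, and for $z\in\Omega$ and $1\le i\le m$, \[\delta^*k'^i_z=\sum_j X_{ij}(z)\,k^j_z.\]
   Context: $A(\Omega)$ is the closure, in the supremum norm on $\Omega$, of the set of functions holomorphic on some neighbourhood of $\overline\Omega$; $\ell^2_m$ is the $m$-dimensional Hilbert space. A quasi-free Hilbert module of rank $m$ over $A(\Omega)$ is a Hilbert space $\mathcal R$ obtained as the completion of $A(\Omega)\otimes\ell^2_m$ (regarded as $\ell^2_m$-valued holomorphic functions on $\Omega$) with respect to an inner product such that: (1) for each $z\in\Omega$ evaluation at $z$ is bounded, with norm locally uniformly bounded in $z$; (2) $\|\varphi F\|_{\mathcal R}\le\|\varphi\|_{A(\Omega)}\|F\|_{\mathcal R}$; (3) if $(F_i)$ is Cauchy in $\mathcal R$-norm, then $F_i(z)\to0$ for all $z$ iff $\|F_i\|_{\mathcal R}\to0$. A generating set is $\{f_1,\dots,f_m\}\subset\mathcal R$ whose $A(\Omega)$-multiples span a dense subspace and such that its localizations at each $z$ form a basis (so $\{f_i(z)\}$ is a basis of $\ell^2_m$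 for each $z$). $\delta(\mathcal R,\mathcal R')$ is the closed, densely defined module transformation whose graph is the closure in $\mathcal R\oplus\mathcal R'$ of the span of $\{\varphi f_i\oplus\varphi g_i:\varphi\in A(\Omega),1\le i\le m\}$. The dual sets of kernel functions are the vectors $k^i_z\in\mathcal R$ and $k'^i_z\in\mathcal R'$ determined by $\langle k,k^i_z\rangle_{\mathcal R}=\langle k(z),f_i(z)\rangle_{\ell^2_m}$ for all $k\in\mathcal R$ and $\langle h,k'^i_z\rangle_{\mathcal R'}=\langle h(z),g_i(z)\rangle_{\ell^2_m}$ for all $h\in\mathcal R'$. For $z\in\Omega$, $(X_{ij}(z))_{i,j=1}^m$ is the matrix satisfying $\langle\sum_jX_{ij}(z)f_j(z),f_\ell(z)\rangle_{\ell^2_m}=\langle g_i(z),g_\ell(z)\rangle_{\ell^2_m}$ for $1\le i,\ell\le m$. *)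

theory Defs
  imports "HOL-Analysis.Analysis" "HOL-Library.Function_Algebras"
begin

(* Points of C^n are  complex^'n ;  l^2_m is  complex^'m  with the standard inner product. *)

definition l2inner :: "complex^'m \<Rightarrow> complex^'m \<Rightarrow> complex" where
  "l2inner u v = (\<Sum>k\<in>UNIV. u $ k * cnj (v $ k))"

definition bounded_domain :: "(complex^'n) set \<Rightarrow> bool" where
  "bounded_domain \<Omega> \<longleftrightarrow> open \<Omega> \<and> connected \<Omega> \<and> \<Omega> \<noteq> {} \<and> bounded \<Omega>"

definition holo_on :: "(complex^'n) set \<Rightarrow> (complex^'n \<Rightarrow> complex) \<Rightarrow> bool" where
  "holo_on U \<phi> \<longleftrightarrow> (\<forall>z\<in>U. \<exists>L. (\<phi> has_derivative L) (at z) \<and> (\<forall>c v. L (c *s v) = c * L v))"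

(* A(Omega): sup-norm closure on Omega of functions holomorphic near closure Omega *)
definition Aalg :: "(complex^'n) set \<Rightarrow> (complex^'n \<Rightarrow> complex) set" where
  "Aalg \<Omega> = {\<phi>. \<forall>\<epsilon>>0. \<exists>U \<psi>. open U \<and> closure \<Omega> \<subseteq> U \<and> holo_on U \<psi> \<and>
                         (SUP z\<in>\<Omega>. norm (\<phi> z - \<psi> z)) < \<epsilon> \<and> bdd_above ((\<lambda>z. norm (\<phi> z - \<psi> z)) ` \<Omega>)}"

definition supnorm :: "(complex^'n) set \<Rightarrow> (complex^'n \<Rightarrow> complex) \<Rightarrow> real" where
  "supnorm \<Omega> \<phi> = (SUP z\<in>\<Omega>. norm (\<phi> z))"

definition mmult :: "('a \<Rightarrow> complex) \<Rightarrow> ('a \<Rightarrow> complex^'m) \<Rightarrow> ('a \<Rightarrow> complex^'m)" where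
  "mmult \<phi> F = (\<lambda>z. \<phi> z *s F z)"

definition sc :: "complex \<Rightarrow> ('a \<Rightarrow> complex^'m) \<Rightarrow> ('a \<Rightarrow> complex^'m)" where
  "sc c F = (\<lambda>z. c *s F z)"

(* A(Omega) \<otimes> l^2_m regarded as l^2_m-valued functions on Omega (extended by 0 outside) *)
definition Avec :: "(complex^'n) set \<Rightarrow> (complex^'n \<Rightarrow> complex^'m) set" where
  "Avec \<Omega> = {F. (\<forall>k. (\<lambda>z. F z $ k) \<in> Aalg \<Omega>) \<and> (\<forall>z. z \<notin> \<Omega> \<longrightarrow> F z = 0)}"

definition hnorm :: "('f \<Rightarrow> 'f \<Rightarrow> complex) \<Rightarrow> 'f \<Rightarrow> real" where
  "hnorm ip F = sqrt (Re (ip F F))"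

definition hilbert_fun_space ::
  "('a \<Rightarrow> complex^'m) set \<Rightarrow> (('a \<Rightarrow> complex^'m) \<Rightarrow> ('a \<Rightarrow> complex^'m) \<Rightarrow> complex) \<Rightarrow> bool" where
  "hilbert_fun_space H ip \<longleftrightarrow>
     0 \<in> H \<and> (\<forall>F\<in>H. \<forall>G\<in>H. F + G \<in> H) \<and> (\<forall>c. \<forall>F\<in>H. sc c F \<in> H) \<and>
     (\<forall>F\<in>H. \<forall>G\<in>H. \<forall>K\<in>H. ip (F + G) K = ip F K + ip G K) \<and>
     (\<forall>c. \<forall>F\<in>H. \<forall>G\<in>H. ip (sc c F) G = c * ip F G) \<and>
     (\<forall>F\<in>H. \<forall>G\<in>H. ip G F = cnj (ip F G)) \<and>
     (\<forall>F\<in>H. F \<noteq> 0 \<longrightarrow> Re (ip F F) > 0) \<and>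
     (\<forall>X::nat \<Rightarrow> _. (\<forall>k. X k \<in> H) \<and> (\<forall>\<epsilon>>0. \<exists>N. \<forall>a\<ge>N. \<forall>b\<ge>N. hnorm ip (X a - X b) < \<epsilon>)
          \<longrightarrow> (\<exists>L\<in>H. \<forall>\<epsilon>>0. \<exists>N. \<forall>a\<ge>N. hnorm ip (X a - L) < \<epsilon>))"

(* quasi-free Hilbert module over A(Omega) (rank m = CARD('m)), realised as the completion
   of A(Omega) \<otimes> l^2_m inside the l^2_m-valued functions on Omega *)
definition quasi_free ::
  "(complex^'n) set \<Rightarrow> (complex^'n \<Rightarrow> complex^'m) set \<Rightarrow>
   ((complex^'n \<Rightarrow> complex^'m) \<Rightarrow> (complex^'n \<Rightarrow> complex^'m) \<Rightarrow> complex) \<Rightarrow> bool" where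
  "quasi_free \<Omega> H ip \<longleftrightarrow>
     hilbert_fun_space H ip \<and>
     (\<forall>F\<in>H. \<forall>z. z \<notin> \<Omega> \<longrightarrow> F z = 0) \<and>
     Avec \<Omega> \<subseteq> H \<and>
     (\<forall>F\<in>H. \<forall>\<epsilon>>0. \<exists>G\<in>Avec \<Omega>. hnorm ip (F - G) < \<epsilon>) \<and>
     (\<forall>z\<in>\<Omega>. \<exists>r>0. \<exists>C. \<forall>w\<in>\<Omega> \<inter> ball z r. \<forall>F\<in>H. norm (F w) \<le> C * hnorm ip F) \<and>
     (\<forall>\<phi>\<in>Aalg \<Omega>. \<forall>F\<in>H. mmult \<phi> F \<in> H \<and> hnorm ip (mmult \<phi> F) \<le> supnorm \<Omega> \<phi> * hnorm ip F)"

definition is_basis :: "('m \<Rightarrow> complex^'m) \<Rightarrow> bool" where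
  "is_basis v \<longleftrightarrow> (\<forall>w. \<exists>!c. w = (\<Sum>i\<in>UNIV. c i *s v i))"

definition generating_set ::
  "(complex^'n) set \<Rightarrow> (complex^'n \<Rightarrow> complex^'m) set \<Rightarrow>
   ((complex^'n \<Rightarrow> complex^'m) \<Rightarrow> (complex^'n \<Rightarrow> complex^'m) \<Rightarrow> complex) \<Rightarrow>
   ('m \<Rightarrow> (complex^'n \<Rightarrow> complex^'m)) \<Rightarrow> bool" where
  "generating_set \<Omega> H ip f \<longleftrightarrow>
     (\<forall>i. f i \<in> H) \<and>
     (\<forall>F\<in>H. \<forall>\<epsilon>>0. \<exists>T c. finite T \<and> T \<subseteq> {mmult \<phi> (f i) | \<phi> i. \<phi> \<in> Aalg \<Omega>} \<and>
                           hnorm ip (F - (\<Sum>t\<in>T. sc (c t) t)) < \<epsilon>) \<and>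
     (\<forall>z\<in>\<Omega>. is_basis (\<lambda>i. f i z))"

definition fspan :: "('a \<Rightarrow> complex^'m) set \<Rightarrow> ('a \<Rightarrow> complex^'m) set" where
  "fspan S = {\<Sum>t\<in>T. sc (c t) t | T c. finite T \<and> T \<subseteq> S}"

definition pspan :: "(('a \<Rightarrow> complex^'m) \<times> ('b \<Rightarrow> complex^'k)) set \<Rightarrow>
                     (('a \<Rightarrow> complex^'m) \<times> ('b \<Rightarrow> complex^'k)) set" where
  "pspan S = {(\<Sum>t\<in>T. sc (c t) (fst t), \<Sum>t\<in>T. sc (c t) (snd t)) | T c. finite T \<and> T \<subseteq> S}"

(* graph of delta(R,R'): closure in R \<oplus> R' of span{phi f_i \<oplus> phi g_i} *)
definition delta_graph ::
  "(complex^'n) set \<Rightarrow>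
   (complex^'n \<Rightarrow> complex^'m) set \<Rightarrow> ((complex^'n \<Rightarrow> complex^'m) \<Rightarrow> (complex^'n \<Rightarrow> complex^'m) \<Rightarrow> complex) \<Rightarrow>
   (complex^'n \<Rightarrow> complex^'m) set \<Rightarrow> ((complex^'n \<Rightarrow> complex^'m) \<Rightarrow> (complex^'n \<Rightarrow> complex^'m) \<Rightarrow> complex) \<Rightarrow>
   ('m \<Rightarrow> (complex^'n \<Rightarrow> complex^'m)) \<Rightarrow> ('m \<Rightarrow> (complex^'n \<Rightarrow> complex^'m)) \<Rightarrow>
   ((complex^'n \<Rightarrow> complex^'m) \<times> (complex^'n \<Rightarrow> complex^'m)) set" where
  "delta_graph \<Omega> H ip H' ip' f g =
     {(u, v). u \<in> H \<and> v \<in> H' \<and>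
        (\<forall>\<epsilon>>0. \<exists>(a, b)\<in>pspan {(mmult \<phi> (f i), mmult \<phi> (g i)) | \<phi> i. \<phi> \<in> Aalg \<Omega>}.
            sqrt ((hnorm ip (u - a))\<^sup>2 + (hnorm ip' (v - b))\<^sup>2) < \<epsilon>)}"

(* graph of the Hilbert space adjoint T^* : H' \<rightarrow> H of an operator T : H \<rightarrow> H' with graph G:
   (y, x) \<in> graph T^*  iff  <T u, y> = <u, x> for all u in dom T *)
definition adjoint_graph ::
  "('f set) \<Rightarrow> ('f \<Rightarrow> 'f \<Rightarrow> complex) \<Rightarrow> ('g set) \<Rightarrow> ('g \<Rightarrow> 'g \<Rightarrow> complex) \<Rightarrow>
   ('f \<times> 'g) set \<Rightarrow> ('g \<times> 'f) set" where
  "adjoint_graph H ip H' ip' G = {(y, x). y \<in> H' \<and> x \<in> H \<and> (\<forall>(u, v)\<in>G. ip' v y = ip u x)}"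

end

theory Submission
  imports Defs
begin

(* Fix z in Omega and i, and put w = sum_j X_ij(z) f_j(z). The defining relation of X says
   <g_l(z), g_i(z)> = <f_l(z), w> for every l, so the linear functional
   (u, v) |-> <v(z), g_i(z)> - <u(z), w> vanishes on the generators phi f_l (+) phi g_l of the
   graph of delta, hence on their span, and, point evaluation at z being bounded, on its closure.
   By the reproducing properties of k'^i_z and k^j_z this says
   <v, k'^i_z> = <u, sum_j X_ij(z) k^j_z> for every (u, v) in the graph. The span of the k'^i_z
   then lies in the domain of delta^* because the graph of an adjoint is a linear subspace. *)

lemma sum_apply: "(\<Sum>t\<in>T. F t) x = (\<Sum>t\<in>T. F t x)"
  by (induction T rule: infinite_finite_induct) auto

lemma l2inner_diff_left: "l2inner (a - b) c = l2inner a c - l2inner b c"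
  by (simp add: l2inner_def sum_subtractf left_diff_distrib)

lemma l2inner_scale_left: "l2inner (c *s a) b = c * l2inner a b"
  by (simp add: l2inner_def sum_distrib_left mult.assoc)

lemma l2inner_cnj: "cnj (l2inner a b) = l2inner b a"
  by (simp add: l2inner_def mult.commute)

lemma l2inner_sum_left:
  "finite T \<Longrightarrow> l2inner (\<Sum>t\<in>T. c t *s a t) y = (\<Sum>t\<in>T. c t * l2inner (a t) y)"
  by (simp add: l2inner_def sum_distrib_left sum_distrib_right mult.assoc sum.swap[of _ T])

lemma l2inner_sum_right:
  "finite T \<Longrightarrow> l2inner x (\<Sum>t\<in>T. c t *s a t) = (\<Sum>t\<in>T. cnj (c t) * l2inner x (a t))"
  by (simp add: l2inner_def sum_distrib_left sum_distrib_right mult.commute mult.left_commute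
      sum.swap[of _ T])

lemma norm_l2inner_le: "norm (l2inner x (y::complex^'m)) \<le> real CARD('m) * norm x * norm y"
proof -
  have "norm (l2inner x y) \<le> (\<Sum>k\<in>UNIV. norm (x $ k * cnj (y $ k)))"
    unfolding l2inner_def by (rule norm_sum)
  also have "\<dots> \<le> (\<Sum>k\<in>(UNIV::'m set). norm x * norm y)"
    by (rule sum_mono) (simp add: norm_mult mult_mono Finite_Cartesian_Product.norm_nth_le)
  finally show ?thesis by simp
qed

lemma hilbert_fun_spaceD:
  assumes "hilbert_fun_space H ip"
  shows "0 \<in> H" and "F \<in> H \<Longrightarrow> G \<in> H \<Longrightarrow> F + G \<in> H" and "F \<in> H \<Longrightarrow> sc c F \<in> H"
    and "F \<in> H \<Longrightarrow> G \<in> H \<Longrightarrow> K \<in> H \<Longrightarrow> ip (F + G) K = ip F K + ip G K"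
    and "F \<in> H \<Longrightarrow> G \<in> H \<Longrightarrow> ip (sc c F) G = c * ip F G"
    and "F \<in> H \<Longrightarrow> G \<in> H \<Longrightarrow> ip G F = cnj (ip F G)"
    and "F \<in> H \<Longrightarrow> F \<noteq> 0 \<Longrightarrow> Re (ip F F) > 0"
  using assms unfolding hilbert_fun_space_def by metis+

lemma hilbert_fun_space_sum_mem:
  assumes "hilbert_fun_space H ip" "finite T" "\<And>t. t \<in> T \<Longrightarrow> a t \<in> H"
  shows "(\<Sum>t\<in>T. sc (c t) (a t)) \<in> H"
  using assms(2,3)
  by (induction T rule: finite_induct) (auto intro: hilbert_fun_spaceD[OF assms(1)])

lemma hilbert_fun_space_diff_mem:
  assumes "hilbert_fun_space H ip" "F \<in> H" "G \<in> H"
  shows "F - G \<in> H"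
proof -
  have "F + sc (-1) G \<in> H" using assms by (blast intro: hilbert_fun_spaceD)
  moreover have "F + sc (-1) G = F - G" by (simp add: fun_eq_iff sc_def)
  ultimately show ?thesis by simp
qed

lemma hilbert_fun_space_inner_zero_left:
  fixes H :: "('a \<Rightarrow> complex^'m) set"
  assumes "hilbert_fun_space H ip" "K \<in> H"
  shows "ip 0 K = 0"
proof -
  have "ip (sc 0 0) K = 0 * ip 0 K"
    by (rule hilbert_fun_spaceD(5)[OF assms(1) hilbert_fun_spaceD(1)[OF assms(1)] assms(2)])
  moreover have "sc 0 (0 :: 'a \<Rightarrow> complex^'m) = 0" by (simp add: fun_eq_iff sc_def)
  ultimately show ?thesis by simp
qed

lemma hilbert_fun_space_inner_sum_left:
  assumes "hilbert_fun_space H ip" "finite T" "\<And>t. t \<in> T \<Longrightarrow> a t \<in> H" "K \<in> H"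
  shows "ip (\<Sum>t\<in>T. sc (c t) (a t)) K = (\<Sum>t\<in>T. c t * ip (a t) K)"
  using assms(2,3)
proof (induction T rule: finite_induct)
  case empty
  show ?case using hilbert_fun_space_inner_zero_left[OF assms(1,4)] by (simp only: sum.empty)
next
  case (insert x T)
  have ax: "a x \<in> H" and aT: "\<And>t. t \<in> T \<Longrightarrow> a t \<in> H" using insert.prems by auto
  have sx: "sc (c x) (a x) \<in> H" by (rule hilbert_fun_spaceD(3)[OF assms(1) ax])
  have sT: "(\<Sum>t\<in>T. sc (c t) (a t)) \<in> H"
    by (rule hilbert_fun_space_sum_mem[OF assms(1) insert.hyps(1) aT])
  have "ip (\<Sum>t\<in>insert x T. sc (c t) (a t)) K = ip (sc (c x) (a x) + (\<Sum>t\<in>T. sc (c t) (a t))) K"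
    by (subst sum.insert[OF insert.hyps]) (rule refl)
  also have "\<dots> = ip (sc (c x) (a x)) K + ip (\<Sum>t\<in>T. sc (c t) (a t)) K"
    by (rule hilbert_fun_spaceD(4)[OF assms(1) sx sT assms(4)])
  also have "\<dots> = c x * ip (a x) K + (\<Sum>t\<in>T. c t * ip (a t) K)"
    by (simp only: hilbert_fun_spaceD(5)[OF assms(1) ax assms(4)] insert.IH[OF aT])
  also have "\<dots> = (\<Sum>t\<in>insert x T. c t * ip (a t) K)"
    by (rule sum.insert[OF insert.hyps, symmetric])
  finally show ?case .
qed

lemma hilbert_fun_space_inner_sum_right:
  assumes "hilbert_fun_space H ip" "finite T" "\<And>t. t \<in> T \<Longrightarrow> a t \<in> H" "K \<in> H"
  shows "ip K (\<Sum>t\<in>T. sc (c t) (a t)) = (\<Sum>t\<in>T. cnj (c t) * ip K (a t))"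
proof -
  have "ip K (\<Sum>t\<in>T. sc (c t) (a t)) = cnj (ip (\<Sum>t\<in>T. sc (c t) (a t)) K)"
    by (rule hilbert_fun_spaceD(6)[OF assms(1) hilbert_fun_space_sum_mem[OF assms(1-3)] assms(4)])
  also have "\<dots> = (\<Sum>t\<in>T. cnj (c t) * cnj (ip (a t) K))"
    by (simp add: hilbert_fun_space_inner_sum_left[OF assms])
  also have "\<dots> = (\<Sum>t\<in>T. cnj (c t) * ip K (a t))"
    using assms by (intro sum.cong refl) (simp add: hilbert_fun_spaceD(6)[of H ip K])
  finally show ?thesis .
qed

lemma hnorm_nonneg:
  assumes "hilbert_fun_space H ip" "F \<in> H"
  shows "0 \<le> hnorm ip F"
proof (cases "F = 0")
  case True
  then show ?thesis
    using hilbert_fun_space_inner_zero_left[OF assms(1) hilbert_fun_spaceD(1)[OF assms(1)]]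
    by (simp add: hnorm_def)
next
  case False
  then show ?thesis using hilbert_fun_spaceD(7)[OF assms] by (simp add: hnorm_def)
qed

lemma quasi_free_hilbert_fun_space: "quasi_free \<Omega> H ip \<Longrightarrow> hilbert_fun_space H ip"
  unfolding quasi_free_def by blast

lemma quasi_free_mmult_mem:
  assumes "quasi_free \<Omega> H ip" "\<phi> \<in> Aalg \<Omega>" "F \<in> H"
  shows "mmult \<phi> F \<in> H"
proof -
  have "\<forall>\<phi>\<in>Aalg \<Omega>. \<forall>F\<in>H. mmult \<phi> F \<in> H \<and> hnorm ip (mmult \<phi> F) \<le> supnorm \<Omega> \<phi> * hnorm ip F"
    using assms(1) unfolding quasi_free_def by (elim conjE)
  then show ?thesis using assms(2,3) by blast
qed

lemma quasi_free_l2inner_eval_bounded: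
  fixes H :: "(complex^'n \<Rightarrow> complex^'m) set"
  assumes qf: "quasi_free \<Omega> H ip" and z: "z \<in> \<Omega>"
  obtains C where "0 \<le> C" "\<And>F. F \<in> H \<Longrightarrow> norm (l2inner (F z) y) \<le> C * hnorm ip F"
proof -
  have "\<forall>z\<in>\<Omega>. \<exists>r>0. \<exists>C. \<forall>w\<in>\<Omega> \<inter> ball z r. \<forall>F\<in>H. norm (F w) \<le> C * hnorm ip F"
    using qf unfolding quasi_free_def by (elim conjE)
  then obtain r C0 where "r > 0" and bound: "\<forall>w\<in>\<Omega> \<inter> ball z r. \<forall>F\<in>H. norm (F w) \<le> C0 * hnorm ip F"
    using z by blast
  have C0: "norm (F z) \<le> max C0 0 * hnorm ip F" if F: "F \<in> H" for F
  proof -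
    have "norm (F z) \<le> C0 * hnorm ip F" using bound z \<open>r > 0\<close> F by simp
    also have "\<dots> \<le> max C0 0 * hnorm ip F"
      using hnorm_nonneg[OF quasi_free_hilbert_fun_space[OF qf] F] by (simp add: mult_right_mono)
    finally show ?thesis .
  qed
  show ?thesis
  proof
    show "0 \<le> real CARD('m) * norm y * max C0 0" by simp
    fix F assume "F \<in> H"
    have "norm (l2inner (F z) y) \<le> real CARD('m) * norm (F z) * norm y"
      by (rule norm_l2inner_le)
    also have "\<dots> \<le> real CARD('m) * (max C0 0 * hnorm ip F) * norm y"
      using C0[OF \<open>F \<in> H\<close>] by (intro mult_right_mono mult_left_mono) auto
    finally show "norm (l2inner (F z) y) \<le> real CARD('m) * norm y * max C0 0 * hnorm ip F"
      by (simp add: algebra_simps)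
  qed
qed

lemma pspan_subset:
  assumes "hilbert_fun_space H ip" "hilbert_fun_space H' ip'" "S \<subseteq> H \<times> H'"
  shows "pspan S \<subseteq> H \<times> H'"
proof
  fix p assume "p \<in> pspan S"
  then obtain T c where T: "finite T" "T \<subseteq> S"
    and p: "p = (\<Sum>t\<in>T. sc (c t) (fst t), \<Sum>t\<in>T. sc (c t) (snd t))"
    unfolding pspan_def by blast
  have "fst t \<in> H" "snd t \<in> H'" if "t \<in> T" for t
    using T(2) assms(3) that by auto
  then show "p \<in> H \<times> H'"
    unfolding p
    by (simp add: hilbert_fun_space_sum_mem[OF assms(1) T(1)] hilbert_fun_space_sum_mem[OF assms(2) T(1)])
qed

lemma pspan_pointwise_eq:
  assumes "p \<in> pspan S" and "\<forall>q\<in>S. l2inner (snd q z) y = l2inner (fst q z) w"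
  shows "l2inner (snd p z) y = l2inner (fst p z) w"
proof -
  obtain T c where T: "finite T" "T \<subseteq> S"
    and p: "p = (\<Sum>t\<in>T. sc (c t) (fst t), \<Sum>t\<in>T. sc (c t) (snd t))"
    using assms(1) unfolding pspan_def by blast
  have "l2inner (snd p z) y = (\<Sum>t\<in>T. c t * l2inner (snd t z) y)"
    by (simp add: p sum_apply sc_def l2inner_sum_left T(1))
  also have "\<dots> = (\<Sum>t\<in>T. c t * l2inner (fst t z) w)"
    using T(2) assms(2) by (intro sum.cong) (auto simp: subset_iff)
  also have "\<dots> = l2inner (fst p z) w"
    by (simp add: p sum_apply sc_def l2inner_sum_left T(1))
  finally show ?thesis .
qed

lemma delta_graph_subset: "delta_graph \<Omega> H ip H' ip' f g \<subseteq> H \<times> H'"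
  unfolding delta_graph_def by auto

lemma delta_graph_approx:
  assumes "(u, v) \<in> delta_graph \<Omega> H ip H' ip' f g" "\<epsilon> > 0"
  obtains a b where "(a, b) \<in> pspan {(mmult \<phi> (f i), mmult \<phi> (g i)) | \<phi> i. \<phi> \<in> Aalg \<Omega>}"
    and "hnorm ip (u - a) < \<epsilon>" and "hnorm ip' (v - b) < \<epsilon>"
proof -
  obtain a b where ab: "(a, b) \<in> pspan {(mmult \<phi> (f i), mmult \<phi> (g i)) | \<phi> i. \<phi> \<in> Aalg \<Omega>}"
    and close: "sqrt ((hnorm ip (u - a))\<^sup>2 + (hnorm ip' (v - b))\<^sup>2) < \<epsilon>"
    using assms unfolding delta_graph_def by blast
  have "hnorm ip (u - a) < \<epsilon>"
    using close real_sqrt_sum_squares_ge1 by (rule le_less_trans[rotated])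
  moreover have "hnorm ip' (v - b) < \<epsilon>"
    using close real_sqrt_sum_squares_ge2 by (rule le_less_trans[rotated])
  ultimately show ?thesis by (rule that[OF ab])
qed

lemma delta_graph_pointwise_eq:
  assumes qf: "quasi_free \<Omega> H ip" and qf': "quasi_free \<Omega> H' ip'"
    and fH: "\<And>i. f i \<in> H" and gH: "\<And>i. g i \<in> H'" and z: "z \<in> \<Omega>"
    and gen: "\<And>l. l2inner (g l z) y = l2inner (f l z) w"
    and uv: "(u, v) \<in> delta_graph \<Omega> H ip H' ip' f g"
  shows "l2inner (v z) y = l2inner (u z) w"
proof -
  let ?S = "{(mmult \<phi> (f i), mmult \<phi> (g i)) | \<phi> i. \<phi> \<in> Aalg \<Omega>}"
  have hs: "hilbert_fun_space H ip" "hilbert_fun_space H' ip'"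
    using qf qf' by (simp_all add: quasi_free_hilbert_fun_space)
  have uH: "u \<in> H" and vH: "v \<in> H'" using uv delta_graph_subset by blast+
  obtain C where C: "0 \<le> C" "\<And>F. F \<in> H \<Longrightarrow> norm (l2inner (F z) w) \<le> C * hnorm ip F"
    using quasi_free_l2inner_eval_bounded[OF qf z] by blast
  obtain C' where C': "0 \<le> C'" "\<And>F. F \<in> H' \<Longrightarrow> norm (l2inner (F z) y) \<le> C' * hnorm ip' F"
    using quasi_free_l2inner_eval_bounded[OF qf' z] by blast
  have S_sub: "?S \<subseteq> H \<times> H'"
    using quasi_free_mmult_mem[OF qf] quasi_free_mmult_mem[OF qf'] fH gH by blast
  have S_eq: "\<forall>q\<in>?S. l2inner (snd q z) y = l2inner (fst q z) w"
    by (auto simp: mmult_def l2inner_scale_left gen)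
  define d where "d = l2inner (v z) y - l2inner (u z) w"
  have "norm d \<le> 0 + e" if "e > 0" for e
  proof -
    define \<epsilon> where "\<epsilon> = e / (C + C' + 1)"
    have "\<epsilon> > 0" using C(1) C'(1) \<open>e > 0\<close> by (simp add: \<epsilon>_def)
    then obtain a b where ab: "(a, b) \<in> pspan ?S"
      and close: "hnorm ip (u - a) < \<epsilon>" "hnorm ip' (v - b) < \<epsilon>"
      by (rule delta_graph_approx[OF uv])
    have aH: "a \<in> H" and bH: "b \<in> H'" using pspan_subset[OF hs S_sub] ab by auto
    have "d = l2inner ((v - b) z) y - l2inner ((u - a) z) w"
      using pspan_pointwise_eq[OF ab S_eq] by (simp add: d_def l2inner_diff_left)
    then have "norm d \<le> norm (l2inner ((v - b) z) y) + norm (l2inner ((u - a) z) w)"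
      by (simp add: norm_triangle_ineq4)
    also have "\<dots> \<le> C' * hnorm ip' (v - b) + C * hnorm ip (u - a)"
      by (rule add_mono[OF C'(2)[OF hilbert_fun_space_diff_mem[OF hs(2) vH bH]]
            C(2)[OF hilbert_fun_space_diff_mem[OF hs(1) uH aH]]])
    also have "\<dots> \<le> C' * \<epsilon> + C * \<epsilon>"
      using close C(1) C'(1) by (simp add: add_mono mult_left_mono)
    also have "\<dots> \<le> (C + C' + 1) * \<epsilon>"
      using \<open>\<epsilon> > 0\<close> by (simp add: algebra_simps)
    also have "\<dots> = e"
      using C(1) C'(1) by (simp add: \<epsilon>_def)
    finally show ?thesis by simp
  qed
  then have "norm d \<le> 0" by (rule field_le_epsilon)
  then show ?thesis by (simp add: d_def)
qed

lemma adjoint_graphI: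
  "y \<in> H' \<Longrightarrow> x \<in> H \<Longrightarrow> (\<And>u v. (u, v) \<in> G \<Longrightarrow> ip' v y = ip u x) \<Longrightarrow>
    (y, x) \<in> adjoint_graph H ip H' ip' G"
  unfolding adjoint_graph_def by auto

lemma adjoint_graph_sum_mem:
  assumes hs: "hilbert_fun_space H ip" "hilbert_fun_space H' ip'" and G: "G \<subseteq> H \<times> H'"
    and T: "finite T" and yx: "\<And>t. t \<in> T \<Longrightarrow> (y t, x t) \<in> adjoint_graph H ip H' ip' G"
  shows "(\<Sum>t\<in>T. sc (c t) (y t), \<Sum>t\<in>T. sc (c t) (x t)) \<in> adjoint_graph H ip H' ip' G"
proof -
  have yH: "\<And>t. t \<in> T \<Longrightarrow> y t \<in> H'" and xH: "\<And>t. t \<in> T \<Longrightarrow> x t \<in> H"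
    using yx unfolding adjoint_graph_def by auto
  have "ip' v (\<Sum>t\<in>T. sc (c t) (y t)) = ip u (\<Sum>t\<in>T. sc (c t) (x t))" if "(u, v) \<in> G" for u v
  proof -
    have "ip' v (\<Sum>t\<in>T. sc (c t) (y t)) = (\<Sum>t\<in>T. cnj (c t) * ip' v (y t))"
      using G that by (intro hilbert_fun_space_inner_sum_right[OF hs(2) T yH]) auto
    also have "\<dots> = (\<Sum>t\<in>T. cnj (c t) * ip u (x t))"
      using yx that unfolding adjoint_graph_def by (intro sum.cong) auto
    also have "\<dots> = ip u (\<Sum>t\<in>T. sc (c t) (x t))"
      using G that by (intro hilbert_fun_space_inner_sum_right[OF hs(1) T xH, symmetric]) auto
    finally show ?thesis .
  qed
  moreover have "(\<Sum>t\<in>T. sc (c t) (y t)) \<in> H'"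
    using yH by (rule hilbert_fun_space_sum_mem[OF hs(2) T])
  moreover have "(\<Sum>t\<in>T. sc (c t) (x t)) \<in> H"
    using xH by (rule hilbert_fun_space_sum_mem[OF hs(1) T])
  ultimately show ?thesis by (blast intro: adjoint_graphI)
qed

lemma delta_adjoint_kernel:
  assumes qf: "quasi_free \<Omega> H ip" and qf': "quasi_free \<Omega> H' ip'"
    and fH: "\<And>i. f i \<in> H" and gH: "\<And>i. g i \<in> H'" and z: "z \<in> \<Omega>"
    and kH: "\<And>j. k j \<in> H" and k_repr: "\<And>j F. F \<in> H \<Longrightarrow> ip F (k j) = l2inner (F z) (f j z)"
    and k'H: "k' \<in> H'" and k'_repr: "\<And>F. F \<in> H' \<Longrightarrow> ip' F k' = l2inner (F z) (g i z)"
    and X: "\<And>l. l2inner (\<Sum>j\<in>UNIV. X j *s f j z) (f l z) = l2inner (g i z) (g l z)"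
  shows "(k', \<Sum>j\<in>UNIV. sc (X j) (k j)) \<in> adjoint_graph H ip H' ip' (delta_graph \<Omega> H ip H' ip' f g)"
proof (rule adjoint_graphI[OF k'H])
  have hs: "hilbert_fun_space H ip" using qf by (rule quasi_free_hilbert_fun_space)
  show "(\<Sum>j\<in>UNIV. sc (X j) (k j)) \<in> H"
    using kH by (rule hilbert_fun_space_sum_mem[OF hs finite_class.finite_UNIV])
  have gen: "l2inner (g l z) (g i z) = l2inner (f l z) (\<Sum>j\<in>UNIV. X j *s f j z)" for l
    using arg_cong[OF X[of l], of cnj] by (simp add: l2inner_cnj)
  fix u v assume uv: "(u, v) \<in> delta_graph \<Omega> H ip H' ip' f g"
  then have uH: "u \<in> H" and vH: "v \<in> H'" using delta_graph_subset by blast+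
  have "ip' v k' = l2inner (v z) (g i z)" by (rule k'_repr[OF vH])
  also have "\<dots> = l2inner (u z) (\<Sum>j\<in>UNIV. X j *s f j z)"
    by (rule delta_graph_pointwise_eq[OF qf qf' fH gH z gen uv])
  also have "\<dots> = (\<Sum>j\<in>UNIV. cnj (X j) * ip u (k j))"
    by (simp add: l2inner_sum_right k_repr[OF uH])
  also have "\<dots> = ip u (\<Sum>j\<in>UNIV. sc (X j) (k j))"
    using kH
    by (rule hilbert_fun_space_inner_sum_right[OF hs finite_class.finite_UNIV _ uH, symmetric])
  finally show "ip' v k' = ip u (\<Sum>j\<in>UNIV. sc (X j) (k j))" .
qed
theorem lemma3:
  fixes \<Omega> :: "(complex^'n) set"
    and H H' :: "(complex^'n \<Rightarrow> complex^'m) set"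
    and ip ip' :: "(complex^'n \<Rightarrow> complex^'m) \<Rightarrow> (complex^'n \<Rightarrow> complex^'m) \<Rightarrow> complex"
    and f g :: "'m \<Rightarrow> (complex^'n \<Rightarrow> complex^'m)"
    and k k' :: "'m \<Rightarrow> complex^'n \<Rightarrow> (complex^'n \<Rightarrow> complex^'m)"
    and X :: "complex^'n \<Rightarrow> 'm \<Rightarrow> 'm \<Rightarrow> complex"
  assumes "bounded_domain \<Omega>"
    and "quasi_free \<Omega> H ip" and "quasi_free \<Omega> H' ip'"
    and "generating_set \<Omega> H ip f" and "generating_set \<Omega> H' ip' g"
    and "\<And>i z. z \<in> \<Omega> \<Longrightarrow> k i z \<in> H \<and> (\<forall>F\<in>H. ip F (k i z) = l2inner (F z) (f i z))"
    and "\<And>i z. z \<in> \<Omega> \<Longrightarrow> k' i z \<in> H' \<and> (\<forall>F\<in>H'. ip' F (k' i z) = l2inner (F z) (g i z))"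
    and "\<And>z i l. z \<in> \<Omega> \<Longrightarrow>
           l2inner (\<Sum>j\<in>UNIV. X z i j *s f j z) (f l z) = l2inner (g i z) (g l z)"
  shows "fspan {k' i z | i z. z \<in> \<Omega>}
           \<subseteq> fst ` adjoint_graph H ip H' ip' (delta_graph \<Omega> H ip H' ip' f g)
         \<and> (\<forall>z\<in>\<Omega>. \<forall>i. (k' i z, \<Sum>j\<in>UNIV. sc (X z i j) (k j z))
                          \<in> adjoint_graph H ip H' ip' (delta_graph \<Omega> H ip H' ip' f g))"
proof -
  let ?A = "adjoint_graph H ip H' ip' (delta_graph \<Omega> H ip H' ip' f g)"
  have hs: "hilbert_fun_space H ip" "hilbert_fun_space H' ip'"
    using assms(2,3) by (simp_all add: quasi_free_hilbert_fun_space)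
  have fH: "\<And>i. f i \<in> H" and gH: "\<And>i. g i \<in> H'"
    using assms(4,5) unfolding generating_set_def by simp_all
  have kernels: "\<forall>z\<in>\<Omega>. \<forall>i. (k' i z, \<Sum>j\<in>UNIV. sc (X z i j) (k j z)) \<in> ?A"
  proof (intro ballI allI)
    fix z i assume z: "z \<in> \<Omega>"
    show "(k' i z, \<Sum>j\<in>UNIV. sc (X z i j) (k j z)) \<in> ?A"
      by (rule delta_adjoint_kernel[OF assms(2,3) fH gH z])
        (use assms(6,7)[OF z] assms(8)[OF z] in blast)+
  qed
  have "y \<in> fst ` ?A" if y_span: "y \<in> fspan {k' i z | i z. z \<in> \<Omega>}" for y
  proof -
    obtain T c where T: "finite T" "T \<subseteq> {k' i z | i z. z \<in> \<Omega>}" and y: "y = (\<Sum>t\<in>T. sc (c t) t)"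
      using y_span unfolding fspan_def by blast
    have "\<forall>t\<in>T. \<exists>x. (t, x) \<in> ?A" using T(2) kernels by blast
    then have "\<exists>x. \<forall>t\<in>T. (t, x t) \<in> ?A" by (rule bchoice)
    then obtain x where x: "\<forall>t\<in>T. (t, x t) \<in> ?A" ..
    have "(y, \<Sum>t\<in>T. sc (c t) (x t)) \<in> ?A"
      unfolding y using x by (intro adjoint_graph_sum_mem[OF hs delta_graph_subset T(1)]) blast
    then show ?thesis by (rule rev_image_eqI) simp
  qed
  with kernels show ?thesis by blast
qed

end
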